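(* Let $S$ be a finite nonempty set of positive integers, and fix integers $a,b,t\ge 1$ and $c\ge 0$. Let $X$ be a periodic independent set of $G(S)$, with blocks $(B_i)_{i\in\mathbb{Z}}$ and $t$-frames $(F_j)_{j\in\mathbb{Z}}$. Define the charge $\mu(B_i)=a|B_i|-b$. Let $d$ be an $S$-local discharging rule on blocks, defining $\mu^*(B_i)=\mu(B_i)+\sum_{j}d(B_j,B_i)$. Define $\nu^*(F_j)=\sum_{B_i\in F_j}\mu^*(B_i)$ for each $t$-frame $F_j$, and let $d'$ be an $S$-local discharging rule on $t$-frames, defining $\nu'(F_j)=\nu^*(F_j)+\sum_{i}d'(F_i,F_j)$. If $\nu'(F_j)\ge c$ for all $j$, then $\delta(X)\le\frac{at}{bt+c}$.
   Context: The distance graph $G(S)$ has vertex set $\mathbb{Z}$, $i,j$ adjacent iff $|i-j|\in S$; the density of $X\subseteq\mathbb{Z}$ is $\delta(X)=\limsup_{N\to\infty}\frac{|X\cap[-N,N]|}{2N+1}$; $X$ is periodic if $X+p=X$ for some $p\ge1$. For an independent set $X=\{\dots<x_{-1}<x_0<x_1<\dots\}$ indexed by $\mathbb{Z}$ in increasing order, the $i$-th block is $B_i=\{x_i,x_i+1,\dots,x_{i+1}-1\}$ (so $|B_i|=x_{i+1}-x_i$); the block structure of a sequence of consecutive blocks is the list of their sizes in order. A $t$-frame is $F_j=\{B_j,\dots,B_{j+t-1}\}$. A discharging rule on blocks is a function $d$ from ordered pairs of blocks to $\mathbb{Z}$ with $d(B_i,B_j)=-d(B_j,B_i)$; it is $S$-local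 if there is $m=m(S)$ such that $d(B_i,B_j)=0$ whenever $|x_i-x_j|>m$, and when $|x_i-x_j|\le m$, $d(B_i,B_j)$ depends only on the block structure of $B_{i-m},\dots,B_{i+m}$. A discharging rule on frames is a function $d'$ from ordered pairs of $t$-frames to $\mathbb{Z}$ with $d'(F_i,F_j)=-d'(F_j,F_i)$; it is $S$-local if there is $m'=m'(S)$ such that $d'(F_i,F_j)=0$ whenever $|i-j|>m'$, and when $|i-j|\le m'$, $d'(F_i,F_j)$ depends only on the block structure of the frames $F_{i-m'},\dots,F_{i+m'}$. *)

theory Defs
  imports Complex_Main "HOL-Library.Extended_Real"
begin

definition indep_dist :: "int set \<Rightarrow> int set \<Rightarrow> bool" where
  "indep_dist S X \<longleftrightarrow> (\<forall>u\<in>X. \<forall>v\<in>X. \<bar>u - v\<bar> \<notin> S)"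

definition periodic_set :: "int set \<Rightarrow> bool" where
  "periodic_set X \<longleftrightarrow> (\<exists>p::int. p \<ge> 1 \<and> (\<lambda>u. u + p) ` X = X)"

definition density :: "int set \<Rightarrow> ereal" where
  "density X = limsup (\<lambda>N::nat. ereal (real (card (X \<inter> {- int N .. int N})) / real (2 * N + 1)))"

text \<open>x enumerates X increasingly; block i is {x i, ..., x (i+1) - 1}.\<close>
definition bsize :: "(int \<Rightarrow> int) \<Rightarrow> int \<Rightarrow> int" where
  "bsize x i = x (i + 1) - x i"

definition local_block_rule :: "int set \<Rightarrow> (int \<Rightarrow> int) \<Rightarrow> (int \<Rightarrow> int \<Rightarrow> int) \<Rightarrow> bool" where
  "local_block_rule S x d \<longleftrightarrow>
     (\<forall>i j. d i j = - d j i) \<and>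
     (\<exists>m::int. m \<ge> 0 \<and> (\<exists>D. \<forall>i j.
        (\<bar>x i - x j\<bar> > m \<longrightarrow> d i j = 0) \<and>
        (\<bar>x i - x j\<bar> \<le> m \<longrightarrow> d i j = D (map (bsize x) [i - m .. i + m]) (j - i))))"

text \<open>Block structure of the t-frame F_k = {B_k, ..., B_(k+t-1)}.\<close>
definition frame_struct :: "(int \<Rightarrow> int) \<Rightarrow> int \<Rightarrow> int \<Rightarrow> int list" where
  "frame_struct x t k = map (bsize x) [k .. k + t - 1]"

definition local_frame_rule :: "int set \<Rightarrow> (int \<Rightarrow> int) \<Rightarrow> int \<Rightarrow> (int \<Rightarrow> int \<Rightarrow> int) \<Rightarrow> bool" where
  "local_frame_rule S x t d' \<longleftrightarrow>
     (\<forall>i j. d' i j = - d' j i) \<and>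
     (\<exists>m'::int. m' \<ge> 0 \<and> (\<exists>D'. \<forall>i j.
        (\<bar>i - j\<bar> > m' \<longrightarrow> d' i j = 0) \<and>
        (\<bar>i - j\<bar> \<le> m' \<longrightarrow> d' i j = D' (map (frame_struct x t) [i - m' .. i + m']) (j - i))))"

definition zsum :: "(int \<Rightarrow> int) \<Rightarrow> int" where
  "zsum f = sum f {j. f j \<noteq> 0}"

definition mu_star :: "int \<Rightarrow> int \<Rightarrow> (int \<Rightarrow> int) \<Rightarrow> (int \<Rightarrow> int \<Rightarrow> int) \<Rightarrow> int \<Rightarrow> int" where
  "mu_star a b x d i = a * bsize x i - b + zsum (\<lambda>j. d j i)"

definition nu_star :: "int \<Rightarrow> int \<Rightarrow> int \<Rightarrow> (int \<Rightarrow> int) \<Rightarrow> (int \<Rightarrow> int \<Rightarrow> int) \<Rightarrow> int \<Rightarrow> int" where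
  "nu_star a b t x d j = (\<Sum>i\<in>{j .. j + t - 1}. mu_star a b x d i)"

definition nu' :: "int \<Rightarrow> int \<Rightarrow> int \<Rightarrow> (int \<Rightarrow> int) \<Rightarrow> (int \<Rightarrow> int \<Rightarrow> int) \<Rightarrow> (int \<Rightarrow> int \<Rightarrow> int) \<Rightarrow> int \<Rightarrow> int" where
  "nu' a b t x d d' j = nu_star a b t x d j + zsum (\<lambda>i. d' i j)"

end

theory Submission
  imports Defs
begin

text \<open>If \<open>X\<close> has period \<open>p\<close> and \<open>K\<close> points per period, the increasing enumeration satisfies
  \<open>x (i + K) = x i + p\<close>, so block sizes, frame structures and both local discharging rules are
  \<open>K\<close>-periodic in the index, and \<open>\<delta>(X) \<le> K/p\<close>. Antisymmetry makes each discharging step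
  charge-neutral over one period: the \<open>K\<close> blocks of a period carry total charge \<open>a p - b K\<close>,
  and since every block lies in \<open>t\<close> frames, the \<open>K\<close> frames carry \<open>t (a p - b K) \<ge> K c\<close>.
  Rearranging gives \<open>K/p \<le> a t / (b t + c)\<close>.\<close>

lemma map_upto_shift_periodic:
  assumes "\<And>l. f (l + k) = f l"
  shows "map f [a + k .. b + k] = map f [a .. b]"
proof (rule nth_equalityI)
  fix n assume "n < length (map f [a + k .. b + k])"
  then show "map f [a + k .. b + k] ! n = map f [a .. b] ! n"
    using assms[of "a + int n"] by (simp add: algebra_simps)
qed simp

lemma sum_period_shift:
  fixes \<phi> :: "int \<Rightarrow> 'a::cancel_comm_monoid_add"
  assumes per: "\<And>j. \<phi> (j + int K) = \<phi> j"
  shows "(\<Sum>j<K. \<phi> (int j + a)) = (\<Sum>j<K. \<phi> (int j))"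
proof -
  have step: "(\<Sum>j<K. \<phi> (int j + (a + 1))) = (\<Sum>j<K. \<phi> (int j + a))" for a
  proof -
    have "(\<Sum>j<K. \<phi> (int j + (a + 1))) + \<phi> a = (\<Sum>j<Suc K. \<phi> (int j + a))"
      by (subst sum.lessThan_Suc_shift) (simp add: algebra_simps add.commute)
    also have "\<dots> = (\<Sum>j<K. \<phi> (int j + a)) + \<phi> a"
      using per[of a] by (simp add: add.commute)
    finally show ?thesis by simp
  qed
  show ?thesis
  proof (induction a rule: int_induct[where k = 0])
    case (step2 i)
    then show ?case using step[of "i - 1"] by simp
  qed (use step in simp_all)
qed

lemma zsum_shift: "zsum (\<lambda>j. g (j + k)) = zsum g"
  unfolding zsum_def
  by (rule sum.reindex_bij_witness[where i = "\<lambda>j. j - k" and j = "\<lambda>j. j + k"]) auto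

lemma zsum_eq_sum_window:
  assumes "\<And>j. M < \<bar>j - i\<bar> \<Longrightarrow> g j = 0"
  shows "zsum g = (\<Sum>s\<in>{-M..M}. g (i + s))"
proof -
  have "{j. g j \<noteq> 0} \<subseteq> {i - M .. i + M}"
  proof
    fix j assume "j \<in> {j. g j \<noteq> 0}"
    then have "\<bar>j - i\<bar> \<le> M" using assms not_less by blast
    then show "j \<in> {i - M .. i + M}" by auto
  qed
  then have "zsum g = sum g {i - M .. i + M}"
    unfolding zsum_def by (intro sum.mono_neutral_left) auto
  also have "\<dots> = (\<Sum>s\<in>{-M..M}. g (i + s))"
    by (rule sum.reindex_bij_witness[where i = "\<lambda>s. i + s" and j = "\<lambda>j. j - i"]) auto
  finally show ?thesis .
qed

definition periodic_discharging :: "nat \<Rightarrow> int \<Rightarrow> (int \<Rightarrow> int \<Rightarrow> int) \<Rightarrow> bool" where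
  "periodic_discharging K M f \<longleftrightarrow>
     (\<forall>i j. f i j = - f j i) \<and>
     (\<forall>i j. f (i + int K) (j + int K) = f i j) \<and>
     (\<forall>i j. M < \<bar>i - j\<bar> \<longrightarrow> f i j = 0)"

lemma zsum_periodic_discharging_shift:
  assumes "periodic_discharging K M f"
  shows "zsum (\<lambda>i. f i (j + int K)) = zsum (\<lambda>i. f i j)"
proof -
  from assms have per: "\<And>i. f (i + int K) (j + int K) = f i j"
    unfolding periodic_discharging_def by blast
  have "zsum (\<lambda>i. f i (j + int K)) = zsum (\<lambda>i. f (i + int K) (j + int K))"
    by (rule zsum_shift[symmetric])
  also have "\<dots> = zsum (\<lambda>i. f i j)"
    by (simp only: per)
  finally show ?thesis .
qed

text \<open>Charge is only moved around: over one period, what a rule sends from \<open>B\<^sub>j\<^sub>+\<^sub>s\<close> to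
  \<open>B\<^sub>j\<close> cancels against what it sends from \<open>B\<^sub>j\<close> to \<open>B\<^sub>j\<^sub>-\<^sub>s\<close>.\<close>
lemma sum_period_zsum_discharging:
  assumes "periodic_discharging K M f"
  shows "(\<Sum>j<K. zsum (\<lambda>i. f i (int j))) = 0"
proof -
  from assms have anti: "\<And>i j. f i j = - f j i"
    and per: "\<And>i j. f (i + int K) (j + int K) = f i j"
    and supp: "\<And>i j. M < \<bar>i - j\<bar> \<Longrightarrow> f i j = 0"
    unfolding periodic_discharging_def by blast+
  define h where "h s = (\<Sum>j<K. f (int j + s) (int j))" for s
  have h_uminus: "h (- s) = - h s" for s
  proof -
    have "h (- s) = (\<Sum>j<K. - f (int j + - s + s) (int j + - s))"
      unfolding h_def by (intro sum.cong refl) (subst anti, simp)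
    also have "\<dots> = - (\<Sum>j<K. f (int j + - s + s) (int j + - s))"
      by (rule sum_negf)
    also have "(\<Sum>j<K. f (int j + - s + s) (int j + - s)) = h s"
      unfolding h_def
      by (rule sum_period_shift[of "\<lambda>j. f (j + s) j"]) (metis per add.assoc add.commute)
    finally show ?thesis .
  qed
  have "(\<Sum>j<K. zsum (\<lambda>i. f i (int j))) = (\<Sum>j<K. \<Sum>s\<in>{-M..M}. f (int j + s) (int j))"
    by (intro sum.cong refl zsum_eq_sum_window supp)
  also have "\<dots> = (\<Sum>s\<in>{-M..M}. h s)"
    unfolding h_def by (rule sum.swap)
  finally have total: "(\<Sum>j<K. zsum (\<lambda>i. f i (int j))) = (\<Sum>s\<in>{-M..M}. h s)" .
  have "(\<Sum>s\<in>{-M..M}. h s) = (\<Sum>s\<in>{-M..M}. h (- s))"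
    by (rule sum.reindex_bij_witness[where i = uminus and j = uminus]) auto
  also have "\<dots> = - (\<Sum>s\<in>{-M..M}. h s)"
    by (simp add: h_uminus sum_negf)
  finally show ?thesis using total by simp
qed

lemma strict_mono_int_diff_le:
  fixes x :: "int \<Rightarrow> int"
  assumes "strict_mono x" and "i \<le> j"
  shows "j - i \<le> x j - x i"
  using assms(2)
proof (induction j rule: int_ge_induct)
  case (step j)
  have "x j < x (j + 1)" using assms(1) by (simp add: strict_mono_less)
  with step show ?case by linarith
qed simp

lemma strict_mono_int_abs_diff_le:
  fixes x :: "int \<Rightarrow> int"
  assumes "strict_mono x"
  shows "\<bar>i - j\<bar> \<le> \<bar>x i - x j\<bar>"
  using strict_mono_int_diff_le[OF assms, of i j] strict_mono_int_diff_le[OF assms, of j i]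
  by (cases "i \<le> j") auto

lemma strict_mono_surj_int_translation:
  fixes \<sigma> :: "int \<Rightarrow> int"
  assumes mono: "strict_mono \<sigma>" and surj: "surj \<sigma>"
  shows "\<sigma> i = i + \<sigma> 0"
proof -
  have succ: "\<sigma> (i + 1) = \<sigma> i + 1" for i
  proof (rule ccontr)
    assume "\<sigma> (i + 1) \<noteq> \<sigma> i + 1"
    moreover have "\<sigma> i < \<sigma> (i + 1)" using mono by (simp add: strict_mono_less)
    ultimately have gap: "\<sigma> i < \<sigma> i + 1" "\<sigma> i + 1 < \<sigma> (i + 1)" by simp_all
    obtain l where l: "\<sigma> l = \<sigma> i + 1" using surj by (metis surjD)
    have "i < l" "l < i + 1"
      using gap mono by (simp_all flip: l add: strict_mono_less)
    then show False by simp
  qed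
  show ?thesis
  proof (induction i rule: int_induct[where k = 0])
    case (step2 i)
    then show ?case using succ[of "i - 1"] by simp
  qed (simp_all add: succ)
qed

text \<open>Enumerating a periodic set increasingly, translating by a period \<open>p\<close> shifts the
  index by the number \<open>K\<close> of points in a period.\<close>
lemma periodic_enum_shift:
  fixes x :: "int \<Rightarrow> int"
  assumes mono: "strict_mono x" and range: "range x = X"
    and p: "p \<ge> 1" and per: "(\<lambda>u. u + p) ` X = X"
  obtains K :: nat where "K \<ge> 1" and "\<And>i. x (i + int K) = x i + p"
proof -
  have "\<exists>l. x l = x i + p" for i
    using per range by (metis imageI rangeI rangeE)
  then obtain \<sigma> where \<sigma>: "\<And>i. x (\<sigma> i) = x i + p" by metis
  have "strict_mono \<sigma>"
  proof (rule strict_monoI)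
    fix i j :: int assume "i < j"
    then have "x (\<sigma> i) < x (\<sigma> j)" using mono by (simp add: \<sigma> strict_mono_less)
    then show "\<sigma> i < \<sigma> j" using mono by (simp add: strict_mono_less)
  qed
  moreover have "surj \<sigma>"
    unfolding surj_def
  proof
    fix j
    obtain l where "x j = x l + p" using per range by (metis imageE rangeE rangeI)
    then have "j = \<sigma> l" using mono \<sigma> by (metis strict_mono_eq)
    then show "\<exists>l. j = \<sigma> l" ..
  qed
  ultimately have translation: "\<sigma> i = i + \<sigma> 0" for i
    by (rule strict_mono_surj_int_translation)
  have "x 0 < x (\<sigma> 0)" using \<sigma>[of 0] p by simp
  then have "0 < \<sigma> 0" using mono by (simp add: strict_mono_less)
  moreover have "x (i + \<sigma> 0) = x i + p" for i
    using \<sigma>[of i] by (simp only: translation[of i])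
  ultimately show thesis
    using that[of "nat (\<sigma> 0)"] by simp
qed

lemma shift_iterate:
  fixes x :: "int \<Rightarrow> 'a::ring_1"
  assumes "\<And>i. x (i + k) = x i + p"
  shows "x (i + k * q) = x i + of_int q * p"
proof (induction q rule: int_induct[where k = 0])
  case (step1 q)
  have "x (i + k * (q + 1)) = x (i + k * q) + p"
    using assms[of "i + k * q"] by (simp add: algebra_simps)
  with step1 show ?case by (simp add: algebra_simps)
next
  case (step2 q)
  have "x (i + k * q) = x (i + k * (q - 1)) + p"
    using assms[of "i + k * (q - 1)"] by (simp add: algebra_simps)
  with step2 show ?case by (simp add: algebra_simps)
qed simp

lemma bsize_shift:
  assumes "\<And>i. x (i + k) = x i + p"
  shows "bsize x (i + k) = bsize x i"
  using assms[of i] assms[of "i + 1"] unfolding bsize_def by (simp add: algebra_simps)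

lemma frame_struct_shift:
  assumes "\<And>i. x (i + k) = x i + p"
  shows "frame_struct x t (i + k) = frame_struct x t i"
  using map_upto_shift_periodic[of "bsize x" k i "i + t - 1"] bsize_shift[where x = x, OF assms]
  unfolding frame_struct_def by (simp add: algebra_simps)

lemma local_block_rule_periodic_discharging:
  assumes mono: "strict_mono x" and shift: "\<And>i. x (i + int K) = x i + p"
    and rule: "local_block_rule S x d"
  obtains M where "periodic_discharging K M d"
proof -
  obtain m D where anti: "\<And>i j. d i j = - d j i" and local: "\<And>i j.
        (\<bar>x i - x j\<bar> > m \<longrightarrow> d i j = 0) \<and>
        (\<bar>x i - x j\<bar> \<le> m \<longrightarrow> d i j = D (map (bsize x) [i - m .. i + m]) (j - i))"
    using rule unfolding local_block_rule_def by blast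
  have "d (i + int K) (j + int K) = d i j" for i j
  proof -
    have "x (i + int K) - x (j + int K) = x i - x j" using shift by simp
    moreover have "map (bsize x) [i + int K - m .. i + int K + m] = map (bsize x) [i - m .. i + m]"
      using map_upto_shift_periodic[of "bsize x" "int K" "i - m" "i + m"] bsize_shift[where x = x, OF shift]
      by (simp add: algebra_simps)
    ultimately show ?thesis
      using local[of i j] local[of "i + int K" "j + int K"] by (cases "\<bar>x i - x j\<bar> > m") simp_all
  qed
  moreover have "d i j = 0" if "m < \<bar>i - j\<bar>" for i j
    using local[of i j] strict_mono_int_abs_diff_le[OF mono, of i j] that by simp
  ultimately show thesis
    using that[of m] anti unfolding periodic_discharging_def by blast
qed

lemma local_frame_rule_periodic_discharging:
  assumes shift: "\<And>i. x (i + int K) = x i + p"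
    and rule: "local_frame_rule S x t d'"
  obtains M where "periodic_discharging K M d'"
proof -
  obtain m D where anti: "\<And>i j. d' i j = - d' j i" and local: "\<And>i j.
        (\<bar>i - j\<bar> > m \<longrightarrow> d' i j = 0) \<and>
        (\<bar>i - j\<bar> \<le> m \<longrightarrow> d' i j = D (map (frame_struct x t) [i - m .. i + m]) (j - i))"
    using rule unfolding local_frame_rule_def by blast
  have "d' (i + int K) (j + int K) = d' i j" for i j
  proof -
    have "map (frame_struct x t) [i + int K - m .. i + int K + m] = map (frame_struct x t) [i - m .. i + m]"
      using map_upto_shift_periodic[of "frame_struct x t" "int K" "i - m" "i + m"]
        frame_struct_shift[where x = x, OF shift] by (simp add: algebra_simps)
    then show ?thesis
      using local[of i j] local[of "i + int K" "j + int K"] by (cases "\<bar>i - j\<bar> > m") simp_all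
  qed
  then show thesis
    using that[of m] anti local unfolding periodic_discharging_def by blast
qed

lemma sum_bsize_telescope: "(\<Sum>j<n. bsize x (int j)) = x (int n) - x 0"
  by (induction n) (simp_all add: bsize_def algebra_simps)

lemma mu_star_shift:
  assumes "periodic_discharging K M d" and "\<And>i. x (i + int K) = x i + p"
  shows "mu_star a b x d (i + int K) = mu_star a b x d i"
  unfolding mu_star_def
  by (simp add: bsize_shift[where x = x, OF assms(2)] zsum_periodic_discharging_shift[OF assms(1)])

lemma sum_period_mu_star:
  assumes "periodic_discharging K M d" and shift: "\<And>i. x (i + int K) = x i + p"
  shows "(\<Sum>j<K. mu_star a b x d (int j)) = a * p - b * int K"
proof -
  have "(\<Sum>j<K. mu_star a b x d (int j))
      = a * (\<Sum>j<K. bsize x (int j)) - b * int K + (\<Sum>j<K. zsum (\<lambda>i. d i (int j)))"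
    unfolding mu_star_def by (simp add: sum.distrib sum_subtractf sum_distrib_left)
  also have "(\<Sum>j<K. bsize x (int j)) = p"
    using sum_bsize_telescope[where x = x and n = K] shift[of 0] by simp
  also have "(\<Sum>j<K. zsum (\<lambda>i. d i (int j))) = 0"
    by (rule sum_period_zsum_discharging[OF assms(1)])
  finally show ?thesis by simp
qed

lemma nu_star_eq_sum_shift: "nu_star a b t x d j = (\<Sum>s\<in>{0..t - 1}. mu_star a b x d (j + s))"
  unfolding nu_star_def
  by (rule sum.reindex_bij_witness[where i = "\<lambda>s. j + s" and j = "\<lambda>i. i - j"]) auto

text \<open>Every block lies in exactly \<open>t\<close> frames, so over a period the frame charges \<open>\<nu>\<^sup>*\<close> add
  up to \<open>t\<close> times the block charges, and the second discharging again moves nothing out.\<close>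
lemma sum_period_nu':
  assumes "t \<ge> 0" and d: "periodic_discharging K M d" and d': "periodic_discharging K M' d'"
    and shift: "\<And>i. x (i + int K) = x i + p"
  shows "(\<Sum>j<K. nu' a b t x d d' (int j)) = t * (a * p - b * int K)"
proof -
  have "(\<Sum>j<K. nu_star a b t x d (int j))
      = (\<Sum>s\<in>{0..t - 1}. \<Sum>j<K. mu_star a b x d (int j + s))"
    unfolding nu_star_eq_sum_shift by (rule sum.swap)
  also have "\<dots> = (\<Sum>s\<in>{0..t - 1}. \<Sum>j<K. mu_star a b x d (int j))"
    by (intro sum.cong refl sum_period_shift mu_star_shift[where x = x, OF d shift])
  also have "\<dots> = t * (a * p - b * int K)"
    using assms(1) by (simp add: sum_period_mu_star[where x = x, OF d shift])
  finally show ?thesis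
    unfolding nu'_def sum.distrib sum_period_zsum_discharging[OF d'] by simp
qed

lemma periodic_enum_index_gap:
  fixes x :: "int \<Rightarrow> int"
  assumes mono: "strict_mono x" and shift: "\<And>i. x (i + int K) = x i + p"
    and K: "K \<ge> 1" and p: "p \<ge> 1" and "j \<le> i" and span: "x i - x j \<le> D"
  shows "i - j < int K * (D div p + 1)"
proof -
  define q r where "q = (i - j) div int K" and "r = (i - j) mod int K"
  have ij: "i - j = int K * q + r" and r: "0 \<le> r" "r < int K"
    using K unfolding q_def r_def by simp_all
  have "x j + q * p = x (j + int K * q)"
    using shift_iterate[of x "int K" p j q] shift by simp
  also have "\<dots> \<le> x i"
    using mono ij r by (simp add: strict_mono_less_eq)
  finally have "q * p \<le> D" using span by linarith
  then have "q \<le> D div p"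
    using zdiv_mono1[of "q * p" D p] p by simp
  then have "int K * q \<le> int K * (D div p)" by (simp add: mult_left_mono)
  moreover have "int K * (D div p + 1) = int K * (D div p) + int K" by (simp add: algebra_simps)
  ultimately show ?thesis using ij r by linarith
qed

lemma card_periodic_enum_le:
  fixes x :: "int \<Rightarrow> int"
  assumes mono: "strict_mono x" and range: "range x = X"
    and shift: "\<And>i. x (i + int K) = x i + p" and K: "K \<ge> 1" and p: "p \<ge> 1"
  shows "int (card (X \<inter> {- int N .. int N})) \<le> int K * (2 * int N div p + 1)"
proof -
  define I where "I = {i. x i \<in> {- int N .. int N}}"
  define L where "L = int K * (2 * int N div p + 1)"
  have window: "X \<inter> {- int N .. int N} = x ` I"
    using range unfolding I_def by auto
  have L: "0 \<le> L" using K p unfolding L_def by (simp add: pos_imp_zdiv_nonneg_iff)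
  have gap: "i - j < L" if "i \<in> I" "j \<in> I" "j \<le> i" for i j
    using periodic_enum_index_gap[OF mono shift K p \<open>j \<le> i\<close>, of "2 * int N"] that
    unfolding I_def L_def by simp
  show ?thesis
  proof (cases "I = {}")
    case False
    then obtain j where j: "j \<in> I" by blast
    have "I \<subseteq> {j - L .. j + L}"
      using gap[OF _ j] gap[OF j] by fastforce
    then have fin: "finite I" by (rule finite_subset) simp
    have "I \<subseteq> {Min I ..< Min I + L}"
      using gap[OF _ Min_in[OF fin False]] Min_le[OF fin] by fastforce
    then have "card I \<le> nat L"
      using card_mono[of "{Min I ..< Min I + L}" I] by simp
    then have "int (card I) \<le> L"
      using L by (simp add: le_nat_iff)
    then show ?thesis
      unfolding window L_def using card_image_le[OF fin, of x] by linarith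
  qed (use L window L_def in simp)
qed

lemma density_periodic_enum_le:
  fixes x :: "int \<Rightarrow> int"
  assumes mono: "strict_mono x" and range: "range x = X"
    and shift: "\<And>i. x (i + int K) = x i + p" and K: "K \<ge> 1" and p: "p \<ge> 1"
  shows "density X \<le> ereal (real K / real_of_int p)"
proof -
  define g where "g N = ereal (real K / real_of_int p + real K / real (Suc N))" for N
  have "real (card (X \<inter> {- int N .. int N})) / real (2 * N + 1) \<le> real K / p + real K / Suc N" for N
  proof -
    have "real_of_int (int (card (X \<inter> {- int N .. int N}))) \<le> real_of_int (int K * (2 * int N div p + 1))"
      using card_periodic_enum_le[OF mono range shift K p, of N] by (simp only: of_int_le_iff)
    then have "real (card (X \<inter> {- int N .. int N})) \<le> real K * (real_of_int (2 * int N div p) + 1)"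
      by simp
    also have "\<dots> \<le> real K * (2 * N / p + 1)"
      using real_of_int_div4[of "2 * int N" p] by (intro mult_left_mono) auto
    also have "\<dots> \<le> (2 * N + 1) * (real K / p) + real K"
      using p by (simp add: field_simps)
    finally have "real (card (X \<inter> {- int N .. int N})) / (2 * N + 1)
        \<le> ((2 * N + 1) * (real K / p) + real K) / (2 * N + 1)"
      by (rule divide_right_mono) simp
    also have "\<dots> = real K / p + real K / (2 * N + 1)"
      by (simp add: add_divide_distrib)
    also have "real K / (2 * N + 1) \<le> real K / Suc N"
      by (intro divide_left_mono) auto
    finally show ?thesis by simp
  qed
  then have "density X \<le> limsup g"
    unfolding density_def g_def by (intro Limsup_mono always_eventually allI) simp
  also have "g \<longlonglongrightarrow> ereal (real K / real_of_int p)"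
  proof -
    have "(\<lambda>N. real K / real (Suc N)) \<longlonglongrightarrow> 0"
      using LIMSEQ_Suc[OF lim_const_over_n[of "real K"]] by simp
    then have "(\<lambda>N. real K / real_of_int p + real K / real (Suc N)) \<longlonglongrightarrow> real K / real_of_int p"
      using tendsto_add[OF tendsto_const] by fastforce
    then show ?thesis
      unfolding g_def by (rule tendsto_ereal)
  qed
  then have "limsup g = ereal (real K / real_of_int p)"
    by (simp add: lim_imp_Limsup)
  finally show ?thesis .
qed

theorem lemma21:
  fixes S X :: "int set" and a b t c :: int
    and x :: "int \<Rightarrow> int" and d d' :: "int \<Rightarrow> int \<Rightarrow> int"
  assumes "finite S" and "S \<noteq> {}" and "\<forall>s\<in>S. s > 0"
    and "a \<ge> 1" and "b \<ge> 1" and "t \<ge> 1" and "c \<ge> 0"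
    and "indep_dist S X" and "periodic_set X"
    and "strict_mono x" and "range x = X"
    and "local_block_rule S x d"
    and "local_frame_rule S x t d'"
    and "\<forall>j. nu' a b t x d d' j \<ge> c"
  shows "density X \<le> ereal (real_of_int (a * t) / real_of_int (b * t + c))"
proof -
  obtain p where p: "p \<ge> 1" and "(\<lambda>u. u + p) ` X = X"
    using \<open>periodic_set X\<close> unfolding periodic_set_def by blast
  then obtain K where K: "K \<ge> 1" and shift: "\<And>i. x (i + int K) = x i + p"
    using periodic_enum_shift[OF \<open>strict_mono x\<close> \<open>range x = X\<close>] by blast
  obtain M M' where "periodic_discharging K M d" and "periodic_discharging K M' d'"
    using local_block_rule_periodic_discharging[OF \<open>strict_mono x\<close> shift \<open>local_block_rule S x d\<close>]
      local_frame_rule_periodic_discharging[OF shift \<open>local_frame_rule S x t d'\<close>] by metis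
  then have "(\<Sum>j<K. nu' a b t x d d' (int j)) = t * (a * p - b * int K)"
    using \<open>t \<ge> 1\<close> shift by (intro sum_period_nu') simp_all
  moreover have "int K * c \<le> (\<Sum>j<K. nu' a b t x d d' (int j))"
    using sum_mono[of "{..<K}" "\<lambda>_. c"] \<open>\<forall>j. nu' a b t x d d' j \<ge> c\<close> by simp
  ultimately have "int K * (b * t + c) \<le> a * t * p"
    by (simp add: algebra_simps)
  then have "real K * (b * t + c) \<le> (a * t) * p"
    by (metis of_int_le_iff of_int_mult of_int_of_nat_eq)
  then have "real K / p \<le> (a * t) / (b * t + c)"
    using p \<open>b \<ge> 1\<close> \<open>t \<ge> 1\<close> \<open>c \<ge> 0\<close> by (simp add: divide_simps add_pos_nonneg)
  then show ?thesis
    using density_periodic_enum_le[OF \<open>strict_mono x\<close> \<open>range x = X\<close> shift K p] order_trans by fastforce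
qed

end
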